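(* In the quantum switch model of the context (with $W=\infty$), assume in addition that the request processes $\{A_{ij}(t):t\ge0\}$, $i,j\in\mathcal K$, are mutually independent Bernoulli processes. If $(\lambda_{ij}+\epsilon)_{i,j\in\mathcal K}\in\Lambda$ for some $\epsilon>0$, then under the stationary protocol $\pi_{\mathrm{STAT}}$ all requests are served in one time slot on average, i.e. the long-run average latency of requests (number of slots from the slot of a request's arrival until it is addressed) is one slot, the minimum possible since a request arriving in slot $t$ can be addressed no earlier than slot $t+1$.
   Context: Quantum switch model. There are $K$ end nodes $\mathcal K=\{1,\dots,K\}$ and a switch (node $0$); time is slotted, $t=0,1,2,\dots$; pair-indexed quantities are symmetric in $(i,j)$. In slot $t$: (i) $C_{0i}(t)\in\{0,1\}$ EPR pairs are generated between the switch and node $i$, where $\{C_{0i}(t)\}_{t\ge0}$ are mutually independent Bernoulli processes (i.i.d. in $t$) with mean $p_i$. (ii) The switch chooses nonnegative integers $F_{ij}(t)=F_{ji}(t)$ (entanglement swaps for pair $(i,j)$, each consuming one stored switch–$i$ and one stored switch–$j$ pair) with $\sum_iF_{ij}(t)\le E_{0j}(t)$; no limit on swaps per slot ($W=\infty$); each swap succeeds independently with probability $q$; $R_{ij}(t)$ is the number of successes. (iii) $A_{ij}(t)$ new requests for pair $(i,j)$ arrive, with rate $\lambda_{ij}=\mathbb E[A_{ij}(t)]$. Dynamics: $U_{ij}(t+1)=[U_{ij}(t)-E_{ij}(t)-R_{ij}(t)]^++A_{ij}(t)$, $E_{ij}(t+1)=[E_{ij}(t)+R_{ij}(t)-U_{ij}(t)]^+$,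 $E_{0i}(t+1)=E_{0i}(t)-\sum_jF_{ij}(t)+C_{0i}(t)$, with zero initial values; $U_{ij}$ = pending requests, $E_{ij}$ = stored $i$–$j$ pairs, $E_{0i}$ = stored switch–$i$ pairs; memory unlimited, no decoherence. $\Lambda$ is the set of nonnegative matrices $(\lambda_{ij})$ for which there exist nonnegative $f_{ij}=f_{ji}$ with $\sum_if_{ij}\le p_j$ for all $j$ and $\lambda_{ij}\le qf_{ij}$ for all $i,j$. Stationary protocol $\pi_{\mathrm{STAT}}$: with $\epsilon$ as in the claim, fix $\tilde f_{ij}=\tilde f_{ji}\ge0$ with $\sum_i\tilde f_{ij}\le p_j$ and $\lambda_{ij}+\epsilon\le q\tilde f_{ij}$ (e.g. $\tilde f_{ij}=(\lambda_{ij}+\epsilon)/q$). Each switch–$i$ pair generated in any slot is, independently, labelled $(i,j)$ with probability $\tilde f_{ij}/p_i$. Let $\mathcal M^i_{ij}(t)$ be the set of switch–$i$ pairs labelled $(i,j)$ not consumed up to slot $t$; whenever $\mathcal M^i_{ij}(t)$ and $\mathcal M^j_{ij}(t)$ are both nonempty, the switch performs swaps for pair $(i,j)$ consuming one pair from each until one of them is empty. *)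

theory Defs
  imports "HOL-Probability.Probability"
begin

text \<open>End nodes are 1..K; the switch is node 0 (not an index here).
  All randomness of the model is collected in one family of nat-valued random
  variables indexed by rv_idx:
   Gen i t      : C_{0i}(t) in {0,1}
   Label i t    : label of the switch-i pair generated in slot t; value j means
                  label (i,j); any value outside K-{i} means unlabelled (never used)
   Req i j t    : A_{ij}(t) in {0,1}        (canonical index i < j)
   Swp i j t n  : success (1) / failure (0) of the n-th swap for pair (i,j) in
                  slot t                    (canonical index i < j)\<close>

datatype rv_idx = Gen nat nat | Label nat nat | Req nat nat nat | Swp nat nat nat nat

definition nodes :: "nat \<Rightarrow> nat set" where
  "nodes K = {1..K}"

definition node_pairs :: "nat \<Rightarrow> (nat \<times> nat) set" where
  "node_pairs K = {(i, j). i \<in> nodes K \<and> j \<in> nodes K \<and> i < j}"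

definition in_Lambda :: "nat \<Rightarrow> (nat \<Rightarrow> real) \<Rightarrow> real \<Rightarrow> (nat \<Rightarrow> nat \<Rightarrow> real) \<Rightarrow> bool" where
  "in_Lambda K p q lam \<longleftrightarrow>
     (\<forall>i\<in>nodes K. \<forall>j\<in>nodes K. i \<noteq> j \<longrightarrow> lam i j \<ge> 0) \<and>
     (\<exists>f :: nat \<Rightarrow> nat \<Rightarrow> real.
        (\<forall>i j. f i j = f j i \<and> f i j \<ge> 0) \<and>
        (\<forall>j\<in>nodes K. (\<Sum>i\<in>nodes K - {j}. f i j) \<le> p j) \<and>
        (\<forall>i\<in>nodes K. \<forall>j\<in>nodes K. i \<noteq> j \<longrightarrow> lam i j \<le> q * f i j))"

text \<open>Number of stored switch-i pairs labelled (i,j), not consumed before slot t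
  (i.e. |M^i_{ij}(t)|).  In slot t the switch performs min(|M^i_{ij}(t)|,|M^j_{ij}(t)|)
  swaps for (i,j); pairs generated in slot t are available from slot t+1 on.\<close>
fun stat_mem :: "(rv_idx \<Rightarrow> nat) \<Rightarrow> nat \<Rightarrow> nat \<Rightarrow> nat \<Rightarrow> nat" where
  "stat_mem x i j 0 = 0"
| "stat_mem x i j (Suc t) =
     stat_mem x i j t - min (stat_mem x i j t) (stat_mem x j i t)
     + (if x (Gen i t) = 1 \<and> x (Label i t) = j then 1 else 0)"

definition stat_F :: "(rv_idx \<Rightarrow> nat) \<Rightarrow> nat \<Rightarrow> nat \<Rightarrow> nat \<Rightarrow> nat" where
  "stat_F x i j t = min (stat_mem x i j t) (stat_mem x j i t)"

definition stat_R :: "(rv_idx \<Rightarrow> nat) \<Rightarrow> nat \<Rightarrow> nat \<Rightarrow> nat \<Rightarrow> nat" where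
  "stat_R x i j t = card {n. n < stat_F x i j t \<and> x (Swp (min i j) (max i j) t n) = 1}"

definition req_A :: "(rv_idx \<Rightarrow> nat) \<Rightarrow> nat \<Rightarrow> nat \<Rightarrow> nat \<Rightarrow> nat" where
  "req_A x i j t = x (Req (min i j) (max i j) t)"

text \<open>(U_{ij}(t), E_{ij}(t)); nat subtraction realises [.]^+.\<close>
fun stat_UE :: "(rv_idx \<Rightarrow> nat) \<Rightarrow> nat \<Rightarrow> nat \<Rightarrow> nat \<Rightarrow> nat \<times> nat" where
  "stat_UE x i j 0 = (0, 0)"
| "stat_UE x i j (Suc t) =
     (let u = fst (stat_UE x i j t); e = snd (stat_UE x i j t); r = stat_R x i j t
      in (u - e - r + req_A x i j t, e + r - u))"

text \<open>Average latency of requests over the horizon [0,T): total number of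
  request-slots spent pending (a request arriving in slot t and addressed in slot s
  is pending in slots t+1..s, i.e. contributes its latency s - t), divided by the
  number of requests that arrived.\<close>
definition avg_latency :: "nat \<Rightarrow> (rv_idx \<Rightarrow> nat) \<Rightarrow> nat \<Rightarrow> real" where
  "avg_latency K x T =
     real (\<Sum>t<T. \<Sum>(i, j)\<in>node_pairs K. fst (stat_UE x i j t))
     / real (\<Sum>t<T. \<Sum>(i, j)\<in>node_pairs K. req_A x i j t)"

definition rv_index :: "nat \<Rightarrow> rv_idx set" where
  "rv_index K = {Gen i t | i t. i \<in> nodes K} \<union> {Label i t | i t. i \<in> nodes K}
     \<union> {Req i j t | i j t. (i, j) \<in> node_pairs K}
     \<union> {Swp i j t n | i j t n. (i, j) \<in> node_pairs K}"

end

theory Submission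
  imports Defs
begin

(* Under the stationary protocol the switch-i pairs labelled (i,j) form a Bernoulli stream of
   rate ft i j, so by Hoeffding's inequality and Borel-Cantelli, almost surely about ft i j * t of
   them have been generated on either side before slot t, and greedy matching has performed the
   smaller of the two counts as swaps.  The slots with a swap are determined by the generation and
   labelling variables, which are independent of the swap outcomes; conditioning on these slots,
   Hoeffding again shows that about q * ft i j * t swaps have succeeded.  Requests arrive at rate
   lam i j <= q * ft i j - eps, so almost surely the successes eventually outnumber the requests,
   and from then on only the requests of the previous slot are pending.  Hence the total pending
   count differs from the total number of requests by a bounded amount while the latter grows
   linearly, and the average latency tends to 1. *)

section \<open>Ratios of partial sums\<close>

lemma tendsto_ratio_1_if_bounded_difference:
  fixes f g :: "nat \<Rightarrow> real"
  assumes g: "filterlim g at_top sequentially"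
    and bounded: "eventually (\<lambda>n. \<bar>f n - g n\<bar> \<le> B) sequentially"
  shows "(\<lambda>n. f n / g n) \<longlonglongrightarrow> 1"
proof -
  have "(\<lambda>n. B / g n) \<longlonglongrightarrow> 0"
    using g by (intro tendsto_divide_0[OF tendsto_const] filterlim_at_top_imp_at_infinity)
  then have "(\<lambda>n. (f n - g n) / g n) \<longlonglongrightarrow> 0"
  proof (rule Lim_null_comparison[rotated])
    show "eventually (\<lambda>n. norm ((f n - g n) / g n) \<le> B / g n) sequentially"
      using bounded g[unfolded filterlim_at_top_dense, rule_format, of 0]
      by eventually_elim (simp add: divide_right_mono)
  qed
  then have "(\<lambda>n. 1 + (f n - g n) / g n) \<longlonglongrightarrow> 1"
    using tendsto_add[OF tendsto_const] by fastforce
  moreover have "eventually (\<lambda>n. 1 + (f n - g n) / g n = f n / g n) sequentially"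
    using g[unfolded filterlim_at_top_dense, rule_format, of 0]
    by eventually_elim (simp add: field_simps)
  ultimately show ?thesis
    by (rule Lim_transform_eventually)
qed

lemma tendsto_ratio_of_sums_1_if_eventually_shift:
  fixes u a :: "nat \<Rightarrow> nat"
  assumes shift: "\<And>t. t \<ge> T\<^sub>0 \<Longrightarrow> u (Suc t) = a t"
    and bounded: "\<And>t. a t \<le> B"
    and diverges: "filterlim (\<lambda>n. real (\<Sum>t<n. a t)) at_top sequentially"
  shows "(\<lambda>n. real (\<Sum>t<n. u t) / real (\<Sum>t<n. a t)) \<longlonglongrightarrow> 1"
proof (rule tendsto_ratio_1_if_bounded_difference[OF diverges])
  define c where "c = real (\<Sum>t<Suc T\<^sub>0. u t) - real (\<Sum>t<T\<^sub>0. a t)"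
  have sum_u: "real (\<Sum>t<n. u t) = c + real (\<Sum>t<n - 1. a t)" if "n \<ge> Suc T\<^sub>0" for n
    using that
  proof (induction n rule: dec_induct)
    case (step n)
    then obtain m where "n = Suc m" "m \<ge> T\<^sub>0" by (cases n) auto
    with step show ?case by (simp add: shift)
  qed (simp add: c_def)
  show "eventually (\<lambda>n. \<bar>real (\<Sum>t<n. u t) - real (\<Sum>t<n. a t)\<bar> \<le> \<bar>c\<bar> + B) sequentially"
    using eventually_ge_at_top[of "Suc T\<^sub>0"]
  proof eventually_elim
    case (elim n)
    then obtain m where n: "n = Suc m" by (cases n) auto
    have "real (\<Sum>t<n. u t) - real (\<Sum>t<n. a t) = c - real (a m)"
      using sum_u[OF elim] by (simp add: n)
    then show ?case
      using bounded[of m] by simp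
  qed
qed

lemma filterlim_at_top_if_eventually_ge_linear:
  fixes f :: "nat \<Rightarrow> real" and c :: real
  assumes "0 < c" and "eventually (\<lambda>n. c * n \<le> f n) sequentially"
  shows "filterlim f at_top sequentially"
  using assms
  by (intro filterlim_at_top_mono[OF filterlim_tendsto_pos_mult_at_top
        [OF tendsto_const[of c] _ filterlim_real_sequentially]]) auto

section \<open>Functions of finitely many independent coordinates\<close>

definition depends_only_on :: "(('i \<Rightarrow> 'v) \<Rightarrow> 'b) \<Rightarrow> 'i set \<Rightarrow> bool" where
  "depends_only_on \<Phi> A \<longleftrightarrow> (\<forall>x y. (\<forall>k\<in>A. x k = y k) \<longrightarrow> \<Phi> x = \<Phi> y)"

lemma depends_only_onI:
  "(\<And>x y. (\<And>k. k \<in> A \<Longrightarrow> x k = y k) \<Longrightarrow> \<Phi> x = \<Phi> y) \<Longrightarrow> depends_only_on \<Phi> A"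
  unfolding depends_only_on_def by blast

lemma depends_only_onD:
  "depends_only_on \<Phi> A \<Longrightarrow> (\<And>k. k \<in> A \<Longrightarrow> x k = y k) \<Longrightarrow> \<Phi> x = \<Phi> y"
  unfolding depends_only_on_def by blast

lemma depends_only_on_restrict:
  assumes "depends_only_on \<Phi> A"
  shows "\<Phi> (restrict x A) = \<Phi> x"
  by (rule depends_only_onD[OF assms]) simp

lemma sets_PiM_count_space_finite:
  assumes "finite A"
  shows "sets (\<Pi>\<^sub>M i\<in>A. count_space (UNIV :: 'v::countable set)) = Pow (A \<rightarrow>\<^sub>E UNIV)"
proof (intro equalityI subsetI)
  fix T assume "T \<in> sets (\<Pi>\<^sub>M i\<in>A. count_space (UNIV :: 'v set))"
  from sets.sets_into_space[OF this] show "T \<in> Pow (A \<rightarrow>\<^sub>E UNIV)"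
    by (simp add: space_PiM)
next
  fix T assume T: "T \<in> Pow (A \<rightarrow>\<^sub>E (UNIV :: 'v set))"
  have "Pi\<^sub>E A (\<lambda>i. {g i}) = {g}" if "g \<in> T" for g
    using T that by (intro PiE_singleton) (auto simp: PiE_def)
  then have "T = (\<Union>g\<in>T. Pi\<^sub>E A (\<lambda>i. {g i}))"
    by simp
  also have "\<dots> \<in> sets (\<Pi>\<^sub>M i\<in>A. count_space UNIV)"
  proof (intro sets.countable_UN'' sets_PiM_I_finite assms)
    show "countable T"
      using T by (intro countable_subset[OF _ countable_PiE[OF assms]]) auto
  qed auto
  finally show "T \<in> sets (\<Pi>\<^sub>M i\<in>A. count_space UNIV)" .
qed

lemma measurable_PiM_count_space_finite:
  assumes "finite A" and "\<And>x. f x \<in> space N"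
  shows "f \<in> (\<Pi>\<^sub>M i\<in>A. count_space (UNIV :: 'v::countable set)) \<rightarrow>\<^sub>M N"
proof -
  have "sets (\<Pi>\<^sub>M i\<in>A. count_space (UNIV :: 'v set)) = sets (count_space (A \<rightarrow>\<^sub>E UNIV))"
    using assms(1) by (simp add: sets_PiM_count_space_finite)
  then have "f \<in> (\<Pi>\<^sub>M i\<in>A. count_space UNIV) \<rightarrow>\<^sub>M N \<longleftrightarrow> f \<in> count_space (A \<rightarrow>\<^sub>E UNIV) \<rightarrow>\<^sub>M N"
    using measurable_cong_sets[OF _ refl] by blast
  then show ?thesis
    using assms(2) by simp
qed

lemma measurable_depends_only_on:
  fixes X :: "'i \<Rightarrow> 'a \<Rightarrow> 'v::countable"
  assumes "finite A" and "\<And>k. k \<in> A \<Longrightarrow> X k \<in> M \<rightarrow>\<^sub>M count_space UNIV"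
    and "depends_only_on \<Phi> A" and "\<And>x. \<Phi> x \<in> space N"
  shows "(\<lambda>\<omega>. \<Phi> (\<lambda>k. X k \<omega>)) \<in> M \<rightarrow>\<^sub>M N"
proof -
  have "(\<lambda>\<omega>. \<Phi> (\<lambda>k. X k \<omega>)) = \<Phi> \<circ> (\<lambda>\<omega>. restrict (\<lambda>k. X k \<omega>) A)"
    by (simp add: fun_eq_iff depends_only_on_restrict[OF assms(3)])
  also have "\<dots> \<in> M \<rightarrow>\<^sub>M N"
    by (intro measurable_comp[OF measurable_restrict measurable_PiM_count_space_finite] assms)
  finally show ?thesis .
qed

context prob_space
begin

lemma events_depends_only_on:
  fixes X :: "'i \<Rightarrow> 'a \<Rightarrow> 'v::countable"
  assumes indep: "indep_vars (\<lambda>_. count_space UNIV) X I"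
    and "finite A" "A \<subseteq> I" "depends_only_on P A"
  shows "{\<omega>\<in>space M. P (\<lambda>k. X k \<omega>)} \<in> events"
proof -
  have "(\<lambda>\<omega>. P (\<lambda>k. X k \<omega>)) \<in> M \<rightarrow>\<^sub>M count_space UNIV"
    using indep assms(2,3) unfolding indep_vars_def
    by (intro measurable_depends_only_on[OF _ _ assms(4)]) auto
  from measurable_sets[OF this, of "{True}"] show ?thesis
    by (simp add: vimage_def Int_def conj_commute)
qed

lemma indep_vars_depends_only_on:
  fixes X :: "'i \<Rightarrow> 'a \<Rightarrow> 'v::countable"
  assumes indep: "indep_vars (\<lambda>_. count_space UNIV) X I"
    and K: "\<And>s. s \<in> L \<Longrightarrow> finite (K s)" "\<And>s. s \<in> L \<Longrightarrow> K s \<subseteq> I" "disjoint_family_on K L"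
    and \<Phi>: "\<And>s. s \<in> L \<Longrightarrow> depends_only_on (\<Phi> s) (K s)" "\<And>s x. s \<in> L \<Longrightarrow> \<Phi> s x \<in> space (N s)"
  shows "indep_vars N (\<lambda>s \<omega>. \<Phi> s (\<lambda>k. X k \<omega>)) L"
proof -
  have "indep_vars (\<lambda>s. \<Pi>\<^sub>M k\<in>K s. count_space UNIV) (\<lambda>s \<omega>. restrict (\<lambda>k. X k \<omega>) (K s)) L"
    by (rule indep_vars_restrict[OF indep K(2,3)])
  then have "indep_vars N (\<lambda>s \<omega>. \<Phi> s (restrict (\<lambda>k. X k \<omega>) (K s))) L"
    by (rule indep_vars_compose2) (intro measurable_PiM_count_space_finite K \<Phi>)
  moreover have "\<Phi> s (restrict (\<lambda>k. X k \<omega>) (K s)) = \<Phi> s (\<lambda>k. X k \<omega>)" if "s \<in> L" for s \<omega>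
    by (rule depends_only_on_restrict[OF \<Phi>(1)[OF that]])
  ultimately show ?thesis
    by (simp cong: indep_vars_cong)
qed

lemma prob_conj_depends_only_on_disjoint:
  fixes X :: "'i \<Rightarrow> 'a \<Rightarrow> 'v::countable"
  assumes indep: "indep_vars (\<lambda>_. count_space UNIV) X I"
    and AB: "finite A" "finite B" "A \<subseteq> I" "B \<subseteq> I" "A \<inter> B = {}"
    and PQ: "depends_only_on P A" "depends_only_on Q B"
  shows "prob {\<omega>\<in>space M. P (\<lambda>k. X k \<omega>) \<and> Q (\<lambda>k. X k \<omega>)} =
           prob {\<omega>\<in>space M. P (\<lambda>k. X k \<omega>)} * prob {\<omega>\<in>space M. Q (\<lambda>k. X k \<omega>)}"
proof -
  let ?P = "\<lambda>\<omega>. P (\<lambda>k. X k \<omega>)" and ?Q = "\<lambda>\<omega>. Q (\<lambda>k. X k \<omega>)"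
  have "indep_vars (\<lambda>_. count_space UNIV) (\<lambda>b \<omega>. case_bool P Q b (\<lambda>k. X k \<omega>)) UNIV"
    using AB PQ
    by (intro indep_vars_depends_only_on[OF indep, where K="case_bool A B"])
       (auto simp: disjoint_family_on_def split: bool.split)
  moreover have "case_bool (count_space UNIV) (count_space UNIV) = (\<lambda>_. count_space (UNIV :: bool set))"
    and "case_bool ?P ?Q = (\<lambda>b \<omega>. case_bool P Q b (\<lambda>k. X k \<omega>))"
    by (simp_all add: fun_eq_iff split: bool.split)
  ultimately have "indep_var (count_space UNIV) ?P (count_space UNIV) ?Q"
    unfolding indep_var_def by simp
  from indep_varD[OF this, of "{True}" "{True}"] show ?thesis
    by (simp add: vimage_def Int_def conj_commute conj_left_commute)
qed


lemma expectation_of_bool: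
  assumes "{\<omega>\<in>space M. P \<omega>} \<in> events"
  shows "expectation (\<lambda>\<omega>. of_bool (P \<omega>) :: real) = prob {\<omega>\<in>space M. P \<omega>}"
proof -
  have "expectation (\<lambda>\<omega>. of_bool (P \<omega>) :: real) = expectation (indicator {\<omega>\<in>space M. P \<omega>})"
    by (intro Bochner_Integration.integral_cong) (auto simp: indicator_def)
  then show ?thesis
    using assms by simp
qed

section \<open>Concentration along independent index sets\<close>

lemma prob_sum_deviation_ge:
  fixes Y :: "'b \<Rightarrow> 'a \<Rightarrow> real"
  assumes V: "finite V" "V \<noteq> {}" and indep: "indep_vars (\<lambda>_. borel) Y V"
    and bounded: "\<And>s. s \<in> V \<Longrightarrow> AE \<omega> in M. Y s \<omega> \<in> {0..1}"
    and mean: "\<And>s. s \<in> V \<Longrightarrow> expectation (Y s) = m" and "0 \<le> d"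
  shows "prob {\<omega>\<in>space M. d \<le> \<bar>(\<Sum>s\<in>V. Y s \<omega>) - m * card V\<bar>} \<le> 2 * exp (- 2 * d\<^sup>2 / card V)"
proof -
  interpret Hoeffding_ineq M V Y "\<lambda>_. 0" "\<lambda>_. 1" "\<Sum>s\<in>V. expectation (Y s)"
    by unfold_locales (use V indep bounded in auto)
  have "(\<Sum>s\<in>V. expectation (Y s)) = m * card V"
    using mean by simp
  then show ?thesis
    using Hoeffding_ineq_abs_ge[of d] V \<open>0 \<le> d\<close> by (simp add: card_gt_0_iff)
qed

lemma prob_sum_deviation_ge_linear:
  fixes Y :: "nat \<Rightarrow> 'a \<Rightarrow> real" and m \<delta> :: real
  assumes V: "V \<subseteq> {..<t}" and indep: "indep_vars (\<lambda>_. borel) Y V"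
    and bounded: "\<And>s. s \<in> V \<Longrightarrow> AE \<omega> in M. Y s \<omega> \<in> {0..1}"
    and mean: "\<And>s. s \<in> V \<Longrightarrow> expectation (Y s) = m" and "0 < \<delta>"
  shows "prob {\<omega>\<in>space M. \<delta> * t \<le> \<bar>(\<Sum>s\<in>V. Y s \<omega>) - m * card V\<bar>} \<le> 2 * exp (- 2 * \<delta>\<^sup>2 * t)"
proof (cases "V = {}")
  case True
  show ?thesis
  proof (cases "t = 0")
    case False
    then have empty: "{\<omega>\<in>space M. \<delta> * t \<le> \<bar>(\<Sum>s\<in>V. Y s \<omega>) - m * card V\<bar>} = {}"
      using True \<open>0 < \<delta>\<close> by (auto simp: mult_le_0_iff)
    show ?thesis
      by (simp only: empty measure_empty) simp
  qed (rule order_trans[OF prob_le_1], simp)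
next
  case False
  have "finite V" and "card V \<le> t"
    using finite_subset[OF V] card_mono[OF _ V] by auto
  then have "prob {\<omega>\<in>space M. \<delta> * t \<le> \<bar>(\<Sum>s\<in>V. Y s \<omega>) - m * card V\<bar>}
               \<le> 2 * exp (- 2 * (\<delta> * t)\<^sup>2 / card V)"
    using False indep bounded mean \<open>0 < \<delta>\<close> by (intro prob_sum_deviation_ge) auto
  also have "\<dots> \<le> 2 * exp (- 2 * \<delta>\<^sup>2 * t)"
  proof -
    have "\<delta>\<^sup>2 * t * card V \<le> \<delta>\<^sup>2 * t * t"
      using \<open>card V \<le> t\<close> by (intro mult_left_mono) auto
    then show ?thesis
      using False \<open>finite V\<close> by (simp add: field_simps power2_eq_square card_gt_0_iff)
  qed
  finally show ?thesis .
qed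

lemma AE_eventually_notin_if_prob_le_exp:
  assumes "\<And>t. B t \<in> events" and "0 < c" and "\<And>t. prob (B t) \<le> C * exp (- c * t)"
  shows "AE \<omega> in M. eventually (\<lambda>t. \<omega> \<notin> B t) sequentially"
proof -
  have "summable (\<lambda>t. C * exp (- c) ^ t)"
    using \<open>0 < c\<close> by (intro summable_mult summable_geometric) simp
  then have "summable (\<lambda>t. prob (B t))"
    by (rule summable_comparison_test'[where N=0])
       (use assms(3) in \<open>simp add: exp_of_nat_mult[symmetric] mult.commute\<close>)
  then have "AE \<omega> in M. eventually (\<lambda>t. \<omega> \<in> space M - B t) sequentially"
    by (intro borel_cantelli_AE1 assms(1)) (simp add: emeasure_eq_measure)
  then show ?thesis
    by (auto elim: eventually_mono)
qed

lemma prob_le_if_indep_of_finite_valued: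
  fixes Z :: "'a \<Rightarrow> 'w"
  assumes S: "finite S" "\<And>\<omega>. \<omega> \<in> space M \<Longrightarrow> Z \<omega> \<in> S"
    and events: "\<And>v. v \<in> S \<Longrightarrow> {\<omega>\<in>space M. Z \<omega> = v} \<in> events" "\<And>v. v \<in> S \<Longrightarrow> D v \<in> events"
    and indep: "\<And>v. v \<in> S \<Longrightarrow>
      prob ({\<omega>\<in>space M. Z \<omega> = v} \<inter> D v) = prob {\<omega>\<in>space M. Z \<omega> = v} * prob (D v)"
    and bound: "\<And>v. v \<in> S \<Longrightarrow> prob (D v) \<le> e"
  shows "prob {\<omega>\<in>space M. \<omega> \<in> D (Z \<omega>)} \<le> e"
proof -
  have "{\<omega>\<in>space M. \<omega> \<in> D (Z \<omega>)} = (\<Union>v\<in>S. {\<omega>\<in>space M. Z \<omega> = v} \<inter> D v)"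
    using S(2) by auto
  then have "prob {\<omega>\<in>space M. \<omega> \<in> D (Z \<omega>)} \<le> (\<Sum>v\<in>S. prob ({\<omega>\<in>space M. Z \<omega> = v} \<inter> D v))"
    using events by (auto intro!: measure_UNION_le S(1))
  also have "\<dots> \<le> (\<Sum>v\<in>S. prob {\<omega>\<in>space M. Z \<omega> = v} * e)"
    using indep bound by (intro sum_mono) (auto intro: mult_left_mono)
  also have "\<dots> = prob (\<Union>v\<in>S. {\<omega>\<in>space M. Z \<omega> = v}) * e"
    using events(1) S(1)
    by (subst finite_measure_finite_Union) (auto simp: sum_distrib_right disjoint_family_on_def)
  also have "(\<Union>v\<in>S. {\<omega>\<in>space M. Z \<omega> = v}) = space M"
    using S(2) by auto
  finally show ?thesis
    by (simp add: prob_space)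
qed

text \<open>The random index set W is determined by coordinates disjoint from those of the summands,
  so conditionally on W = V the sum is a Hoeffding sum over the fixed set V.\<close>

lemma prob_random_sum_deviation_ge:
  fixes X :: "'i \<Rightarrow> 'a \<Rightarrow> 'v::countable"
    and W :: "('i \<Rightarrow> 'v) \<Rightarrow> nat set" and \<Phi> :: "nat \<Rightarrow> ('i \<Rightarrow> 'v) \<Rightarrow> real" and m :: real
  assumes indep: "indep_vars (\<lambda>_. count_space UNIV) X I"
    and W: "finite J" "J \<subseteq> I" "depends_only_on W J" "\<And>x. W x \<subseteq> {..<t}"
    and L: "\<And>s. finite (L s)" "\<And>s. L s \<subseteq> I" "disjoint_family L" "\<And>s. J \<inter> L s = {}"
    and \<Phi>: "\<And>s. depends_only_on (\<Phi> s) (L s)" "\<And>s x. \<Phi> s x \<in> {0..1}"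
      "\<And>s. expectation (\<lambda>\<omega>. \<Phi> s (\<lambda>k. X k \<omega>)) = m"
    and "0 < \<delta>"
  shows "prob {\<omega>\<in>space M. \<delta> * t \<le>
           \<bar>(\<Sum>s\<in>W (\<lambda>k. X k \<omega>). \<Phi> s (\<lambda>k. X k \<omega>)) - m * card (W (\<lambda>k. X k \<omega>))\<bar>}
         \<le> 2 * exp (- 2 * \<delta>\<^sup>2 * t)"
proof -
  define dev where "dev V x \<longleftrightarrow> \<delta> * t \<le> \<bar>(\<Sum>s\<in>V. \<Phi> s x) - m * card V\<bar>" for V x
  define Dev where "Dev V = {\<omega>\<in>space M. dev V (\<lambda>k. X k \<omega>)}" for V
  have dev_dep: "depends_only_on (dev V) (\<Union>s\<in>V. L s)" for V
  proof (rule depends_only_onI)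
    fix x y :: "'i \<Rightarrow> 'v" assume "\<And>k. k \<in> (\<Union>s\<in>V. L s) \<Longrightarrow> x k = y k"
    then have "\<Phi> s x = \<Phi> s y" if "s \<in> V" for s
      using that by (intro depends_only_onD[OF \<Phi>(1)[of s]]) blast
    then show "dev V x = dev V y"
      by (simp add: dev_def)
  qed
  have W_dep: "depends_only_on (\<lambda>x. W x = V) J" for V
    using W(3) by (auto simp: depends_only_on_def)
  have "prob {\<omega>\<in>space M. \<omega> \<in> Dev (W (\<lambda>k. X k \<omega>))} \<le> 2 * exp (- 2 * \<delta>\<^sup>2 * t)"
  proof (rule prob_le_if_indep_of_finite_valued[where S="Pow {..<t}"])
    fix V assume "V \<in> Pow {..<t}"
    then have V: "V \<subseteq> {..<t}" "finite V"
      using finite_subset by auto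
    show "{\<omega>\<in>space M. W (\<lambda>k. X k \<omega>) = V} \<in> events"
      by (rule events_depends_only_on[OF indep W(1,2) W_dep])
    show "Dev V \<in> events"
      unfolding Dev_def using V L(1,2) by (intro events_depends_only_on[OF indep _ _ dev_dep]) auto
    have "{\<omega>\<in>space M. W (\<lambda>k. X k \<omega>) = V} \<inter> Dev V = {\<omega>\<in>space M. W (\<lambda>k. X k \<omega>) = V \<and> dev V (\<lambda>k. X k \<omega>)}"
      by (auto simp: Dev_def)
    also have "prob \<dots> = prob {\<omega>\<in>space M. W (\<lambda>k. X k \<omega>) = V} * prob (Dev V)"
      unfolding Dev_def using V L
      by (intro prob_conj_depends_only_on_disjoint[OF indep W(1) _ W(2) _ _ W_dep dev_dep]) blast+
    finally show "prob ({\<omega>\<in>space M. W (\<lambda>k. X k \<omega>) = V} \<inter> Dev V) =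
                    prob {\<omega>\<in>space M. W (\<lambda>k. X k \<omega>) = V} * prob (Dev V)" .
    have "indep_vars (\<lambda>_. borel) (\<lambda>s \<omega>. \<Phi> s (\<lambda>k. X k \<omega>)) V"
      using L \<Phi> by (intro indep_vars_depends_only_on[OF indep, where K=L])
        (auto intro: disjoint_family_on_mono)
    then show "prob (Dev V) \<le> 2 * exp (- 2 * \<delta>\<^sup>2 * t)"
      unfolding Dev_def dev_def using \<Phi>(2,3) \<open>0 < \<delta>\<close>
      by (intro prob_sum_deviation_ge_linear[OF V(1)]) auto
  qed (use W(4) in auto)
  then show ?thesis
    by (simp add: Dev_def dev_def)
qed

lemma AE_eventually_random_sum_close:
  fixes X :: "'i \<Rightarrow> 'a \<Rightarrow> 'v::countable"
    and W :: "nat \<Rightarrow> ('i \<Rightarrow> 'v) \<Rightarrow> nat set" and \<Phi> :: "nat \<Rightarrow> ('i \<Rightarrow> 'v) \<Rightarrow> real" and m :: real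
  assumes indep: "indep_vars (\<lambda>_. count_space UNIV) X I"
    and W: "\<And>t. finite (J t)" "\<And>t. J t \<subseteq> I" "\<And>t. depends_only_on (W t) (J t)" "\<And>t x. W t x \<subseteq> {..<t}"
    and L: "\<And>s. finite (L s)" "\<And>s. L s \<subseteq> I" "disjoint_family L" "\<And>s t. J t \<inter> L s = {}"
    and \<Phi>: "\<And>s. depends_only_on (\<Phi> s) (L s)" "\<And>s x. \<Phi> s x \<in> {0..1}"
      "\<And>s. expectation (\<lambda>\<omega>. \<Phi> s (\<lambda>k. X k \<omega>)) = m"
    and "0 < (\<delta> :: real)"
  shows "AE \<omega> in M. eventually (\<lambda>t.
           \<bar>(\<Sum>s\<in>W t (\<lambda>k. X k \<omega>). \<Phi> s (\<lambda>k. X k \<omega>)) - m * card (W t (\<lambda>k. X k \<omega>))\<bar> < \<delta> * t)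
           sequentially"
proof -
  define dev where "dev t x \<longleftrightarrow> \<delta> * t \<le> \<bar>(\<Sum>s\<in>W t x. \<Phi> s x) - m * card (W t x)\<bar>" for t x
  have dev_dep: "depends_only_on (dev t) (J t \<union> (\<Union>s<t. L s))" for t
  proof (rule depends_only_onI)
    fix x y :: "'i \<Rightarrow> 'v" assume xy: "\<And>k. k \<in> J t \<union> (\<Union>s<t. L s) \<Longrightarrow> x k = y k"
    then have "W t x = W t y"
      by (intro depends_only_onD[OF W(3)]) auto
    moreover have "\<Phi> s x = \<Phi> s y" if "s \<in> W t y" for s
      using that W(4) by (intro depends_only_onD[OF \<Phi>(1)[of s]] xy) blast
    ultimately show "dev t x = dev t y"
      by (simp add: dev_def)
  qed
  have "{\<omega>\<in>space M. dev t (\<lambda>k. X k \<omega>)} \<in> events" for t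
    by (rule events_depends_only_on[OF indep _ _ dev_dep]) (use W(1,2) L(1,2) in blast)+
  moreover have "prob {\<omega>\<in>space M. dev t (\<lambda>k. X k \<omega>)} \<le> 2 * exp (- (2 * \<delta>\<^sup>2) * t)" for t :: nat
    using prob_random_sum_deviation_ge[where J="J t" and W="W t" and t=t,
        OF indep W(1-3) W(4) L(1-3) L(4) \<Phi> \<open>0 < \<delta>\<close>]
    by (simp add: dev_def)
  ultimately have "AE \<omega> in M. eventually (\<lambda>t. \<omega> \<notin> {\<omega>\<in>space M. dev t (\<lambda>k. X k \<omega>)}) sequentially"
    using \<open>0 < \<delta>\<close> by (intro AE_eventually_notin_if_prob_le_exp[where c="2 * \<delta>\<^sup>2"]) auto
  then show ?thesis
    by (rule AE_mp) (auto simp: dev_def not_le elim: eventually_mono)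
qed

lemma AE_eventually_sum_close:
  fixes X :: "'i \<Rightarrow> 'a \<Rightarrow> 'v::countable" and \<Phi> :: "nat \<Rightarrow> ('i \<Rightarrow> 'v) \<Rightarrow> real" and m :: real
  assumes indep: "indep_vars (\<lambda>_. count_space UNIV) X I"
    and L: "\<And>s. finite (L s)" "\<And>s. L s \<subseteq> I" "disjoint_family L"
    and \<Phi>: "\<And>s. depends_only_on (\<Phi> s) (L s)" "\<And>s x. \<Phi> s x \<in> {0..1}"
      "\<And>s. expectation (\<lambda>\<omega>. \<Phi> s (\<lambda>k. X k \<omega>)) = m"
    and "0 < (\<delta> :: real)"
  shows "AE \<omega> in M. eventually (\<lambda>t. \<bar>(\<Sum>s<t. \<Phi> s (\<lambda>k. X k \<omega>)) - m * t\<bar> < \<delta> * t) sequentially"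
proof -
  have "AE \<omega> in M. eventually (\<lambda>t.
          \<bar>(\<Sum>s\<in>{..<t}. \<Phi> s (\<lambda>k. X k \<omega>)) - m * card {..<t}\<bar> < \<delta> * t) sequentially"
    using L \<Phi> \<open>0 < \<delta>\<close>
    by (intro AE_eventually_random_sum_close[OF indep, where J="\<lambda>_. {}" and W="\<lambda>t _. {..<t}"])
       (auto simp: depends_only_on_def)
  then show ?thesis
    by simp
qed

end

section \<open>Pathwise dynamics of the stationary protocol\<close>

definition labelled_count :: "(rv_idx \<Rightarrow> nat) \<Rightarrow> nat \<Rightarrow> nat \<Rightarrow> nat \<Rightarrow> nat" where
  "labelled_count x i j t = (\<Sum>s<t. of_bool (x (Gen i s) = 1 \<and> x (Label i s) = j))"

text \<open>Greedy matching swaps, in slot t - 1, all pairs generated before that slot on the scarcer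
  side; so the swaps before slot t number the smaller labelled count one slot earlier (the
  truncated t - 1 gives 0 swaps before slot 0).\<close>

definition swap_count :: "(rv_idx \<Rightarrow> nat) \<Rightarrow> nat \<Rightarrow> nat \<Rightarrow> nat \<Rightarrow> nat" where
  "swap_count x i j t = min (labelled_count x i j (t - 1)) (labelled_count x j i (t - 1))"

lemma labelled_count_0 [simp]: "labelled_count x i j 0 = 0"
  by (simp add: labelled_count_def)

lemma labelled_count_Suc:
  "labelled_count x i j (Suc t) = labelled_count x i j t + of_bool (x (Gen i t) = 1 \<and> x (Label i t) = j)"
  by (simp add: labelled_count_def)

lemma labelled_count_mono: "s \<le> t \<Longrightarrow> labelled_count x i j s \<le> labelled_count x i j t"
  unfolding labelled_count_def by (rule sum_mono2) auto

lemma swap_count_0 [simp]: "swap_count x i j 0 = 0"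
  by (simp add: swap_count_def)

lemma swap_count_Suc:
  "swap_count x i j (Suc t) = min (labelled_count x i j t) (labelled_count x j i t)"
  by (simp add: swap_count_def)

lemma swap_count_commute: "swap_count x i j t = swap_count x j i t"
  by (simp add: swap_count_def min.commute)

lemma swap_count_le_labelled_count: "swap_count x i j t \<le> labelled_count x i j t"
  using labelled_count_mono[of "t - 1" t x i j] by (simp add: swap_count_def)

lemma stat_mem_eq: "stat_mem x i j t = labelled_count x i j t - swap_count x i j t"
proof (induction t arbitrary: i j)
  case (Suc t)
  have "stat_mem x i j t - min (stat_mem x i j t) (stat_mem x j i t) =
        labelled_count x i j t - swap_count x i j (Suc t)"
    using Suc.IH[of i j] Suc.IH[of j i] swap_count_le_labelled_count[of x i j t]
      swap_count_le_labelled_count[of x j i t]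
    by (simp add: swap_count_commute[of x j i] min_diff swap_count_Suc)
  then show ?case
    using swap_count_le_labelled_count[of x i j "Suc t"]
    by (simp add: labelled_count_Suc swap_count_Suc)
qed simp

lemma stat_F_eq: "stat_F x i j t = swap_count x i j (Suc t) - swap_count x i j t"
  using swap_count_le_labelled_count[of x i j t] swap_count_le_labelled_count[of x j i t]
  by (simp add: stat_F_def stat_mem_eq swap_count_commute[of x j i] min_diff swap_count_Suc)

lemma stat_F_le_1: "stat_F x i j t \<le> 1"
  by (cases t) (auto simp: stat_F_eq swap_count_def labelled_count_Suc)

lemma sum_stat_F: "(\<Sum>s<t. stat_F x i j s) = swap_count x i j t"
proof (induction t)
  case (Suc t)
  have "swap_count x i j t \<le> swap_count x i j (Suc t)"
    by (cases t) (auto simp: swap_count_def labelled_count_Suc intro: min.mono)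
  with Suc show ?case by (simp add: stat_F_eq)
qed simp

definition swap_slots :: "(rv_idx \<Rightarrow> nat) \<Rightarrow> nat \<Rightarrow> nat \<Rightarrow> nat \<Rightarrow> nat set" where
  "swap_slots x i j t = {s. s < t \<and> stat_F x i j s = 1}"

lemma card_swap_slots: "card (swap_slots x i j t) = swap_count x i j t"
proof -
  have "card (swap_slots x i j t) = (\<Sum>s<t. of_bool (stat_F x i j s = 1))"
    by (simp add: swap_slots_def sum.If_cases Int_def)
  also have "\<dots> = (\<Sum>s<t. stat_F x i j s)"
    using stat_F_le_1[of x i j] by (intro sum.cong) (auto simp: le_Suc_eq)
  finally show ?thesis
    by (simp add: sum_stat_F)
qed

lemma sum_stat_R:
  assumes "i < j"
  shows "(\<Sum>s<t. stat_R x i j s) = (\<Sum>s\<in>swap_slots x i j t. of_bool (x (Swp i j s 0) = 1))"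
proof -
  have "stat_R x i j s = of_bool (stat_F x i j s = 1 \<and> x (Swp i j s 0) = 1)" for s
  proof -
    have "{n. n < 1 \<and> x (Swp i j s n) = 1} = (if x (Swp i j s 0) = 1 then {0} else {})"
      by auto
    then show ?thesis
      using stat_F_le_1[of x i j s] assms by (cases "stat_F x i j s") (auto simp: stat_R_def)
  qed
  then show ?thesis
    by (simp add: swap_slots_def sum.If_cases Int_def conj_commute conj_left_commute)
qed

lemma stat_UE_balance:
  "int (snd (stat_UE x i j t)) - int (fst (stat_UE x i j t)) =
     int (\<Sum>s<t. stat_R x i j s) - int (\<Sum>s<t. req_A x i j s)"
  by (induction t) (simp_all add: Let_def)

lemma stat_UE_pending_eq_arrivals:
  assumes "(\<Sum>s<t. req_A x i j s) \<le> (\<Sum>s<Suc t. stat_R x i j s)"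
  shows "fst (stat_UE x i j (Suc t)) = req_A x i j t"
proof -
  have "fst (stat_UE x i j t) \<le> snd (stat_UE x i j t) + stat_R x i j t"
    using stat_UE_balance[of x i j t] assms by (simp del: of_nat_sum)
  then show ?thesis
    by (simp add: Let_def)
qed

lemma node_pairsD: "(i, j) \<in> node_pairs K \<Longrightarrow> i < j \<and> i \<in> nodes K \<and> j \<in> nodes K"
  by (simp add: node_pairs_def)

lemma finite_node_pairs: "finite (node_pairs K)"
  by (rule finite_subset[of _ "nodes K \<times> nodes K"]) (auto simp: node_pairs_def nodes_def)

lemma req_A_node_pair: "(i, j) \<in> node_pairs K \<Longrightarrow> req_A x i j t = x (Req i j t)"
  by (auto simp: req_A_def node_pairs_def)

lemma avg_latency_tendsto_1:
  assumes served: "\<And>i j. (i, j) \<in> node_pairs K \<Longrightarrow>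
      eventually (\<lambda>t. (\<Sum>s<t. req_A x i j s) \<le> (\<Sum>s<Suc t. stat_R x i j s)) sequentially"
    and bernoulli: "\<And>i j t. (i, j) \<in> node_pairs K \<Longrightarrow> req_A x i j t \<le> 1"
    and diverges: "filterlim (\<lambda>n. real (\<Sum>t<n. \<Sum>(i, j)\<in>node_pairs K. req_A x i j t)) at_top sequentially"
  shows "avg_latency K x \<longlonglongrightarrow> 1"
proof -
  have "eventually (\<lambda>t. \<forall>(i, j)\<in>node_pairs K. fst (stat_UE x i j (Suc t)) = req_A x i j t) sequentially"
    using eventually_mono[OF served stat_UE_pending_eq_arrivals]
    by (intro eventually_ball_finite finite_node_pairs) (auto simp del: stat_UE.simps)
  then obtain T\<^sub>0 where "\<And>t. t \<ge> T\<^sub>0 \<Longrightarrow> \<forall>(i, j)\<in>node_pairs K. fst (stat_UE x i j (Suc t)) = req_A x i j t"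
    by (auto simp: eventually_sequentially)
  then have shift: "(\<Sum>(i, j)\<in>node_pairs K. fst (stat_UE x i j (Suc t))) = (\<Sum>(i, j)\<in>node_pairs K. req_A x i j t)"
    if "t \<ge> T\<^sub>0" for t
    using that by (intro sum.cong) auto
  have "(\<Sum>(i, j)\<in>node_pairs K. req_A x i j t) \<le> card (node_pairs K)" for t
    using sum_mono[of "node_pairs K" "\<lambda>(i, j). req_A x i j t" "\<lambda>_. 1"] bernoulli by auto
  from tendsto_ratio_of_sums_1_if_eventually_shift[OF shift this diverges]
  show ?thesis
    by (simp add: avg_latency_def[abs_def])
qed

definition gen_label_vars :: "nat \<Rightarrow> nat \<Rightarrow> nat \<Rightarrow> rv_idx set" where
  "gen_label_vars i j t = (\<Union>s<t. {Gen i s, Label i s, Gen j s, Label j s})"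

lemma labelled_count_cong:
  assumes "\<And>s. s < t \<Longrightarrow> x (Gen i s) = y (Gen i s) \<and> x (Label i s) = y (Label i s)"
  shows "labelled_count x i j t = labelled_count y i j t"
  unfolding labelled_count_def using assms by (intro sum.cong) auto

lemma depends_only_on_swap_slots:
  "depends_only_on (\<lambda>x. swap_slots x i j t) (gen_label_vars i j t)"
proof (rule depends_only_onI)
  fix x y :: "rv_idx \<Rightarrow> nat"
  assume xy: "\<And>k. k \<in> gen_label_vars i j t \<Longrightarrow> x k = y k"
  have agree: "x (Gen a s) = y (Gen a s) \<and> x (Label a s) = y (Label a s)"
    if "a \<in> {i, j}" "s < t" for a s
    using that by (auto intro!: xy simp: gen_label_vars_def)
  have "swap_count x i j u = swap_count y i j u" if "u \<le> t" for u
    using that agree unfolding swap_count_def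
    by (intro arg_cong2[where f=min] labelled_count_cong) auto
  then have "stat_F x i j s = stat_F y i j s" if "s < t" for s
    using that by (simp add: stat_F_eq)
  then show "swap_slots x i j t = swap_slots y i j t"
    by (auto simp: swap_slots_def)
qed

text \<open>The slack 4 \<delta> pays for the deviations of the labelled counts, of the successes and of the
  arrivals, and for the extra slot of successes.\<close>

lemma eventually_requests_served:
  fixes f lam q \<delta> :: real
  assumes N_ij: "eventually (\<lambda>t. \<bar>real (labelled_count x i j t) - f * t\<bar> < \<delta> * t) sequentially"
    and N_ji: "eventually (\<lambda>t. \<bar>real (labelled_count x j i t) - f * t\<bar> < \<delta> * t) sequentially"
    and R: "eventually (\<lambda>t. \<bar>real (\<Sum>s<t. stat_R x i j s) - q * swap_count x i j t\<bar> < \<delta> * t) sequentially"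
    and A: "eventually (\<lambda>t. \<bar>real (\<Sum>s<t. req_A x i j s) - lam * t\<bar> < \<delta> * t) sequentially"
    and rate: "lam + 4 * \<delta> \<le> q * f" and q: "0 \<le> q" "q \<le> 1" and "0 < \<delta>"
  shows "eventually (\<lambda>t. (\<Sum>s<t. req_A x i j s) \<le> (\<Sum>s<Suc t. stat_R x i j s)) sequentially"
  using N_ij N_ji eventually_sequentially_Suc[THEN iffD2, OF R] A eventually_ge_at_top[of 1]
proof eventually_elim
  case (elim t)
  have "(f - \<delta>) * t \<le> real (swap_count x i j (Suc t))"
    using elim(1,2) by (auto simp: swap_count_Suc algebra_simps)
  then have "q * ((f - \<delta>) * t) \<le> q * real (swap_count x i j (Suc t))"
    using q(1) by (rule mult_left_mono)
  moreover have "(lam + 4 * \<delta>) * t \<le> q * f * t"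
    using rate by (intro mult_right_mono) auto
  moreover have "q * (\<delta> * t) \<le> \<delta> * t"
    using q \<open>0 < \<delta>\<close> by (intro mult_left_le_one_le) auto
  moreover have "\<delta> \<le> \<delta> * t"
    using \<open>0 < \<delta>\<close> elim(5) by simp
  ultimately have "real (\<Sum>s<t. req_A x i j s) < real (\<Sum>s<Suc t. stat_R x i j s)"
    using elim(3,4) by (simp add: abs_less_iff algebra_simps)
  then show ?case
    by (simp only: of_nat_less_iff less_imp_le)
qed

section \<open>The random model\<close>

locale stationary_switch = prob_space +
  fixes X :: "rv_idx \<Rightarrow> 'a \<Rightarrow> nat" and K :: nat and p :: "nat \<Rightarrow> real" and q \<epsilon> :: real
    and lam ft :: "nat \<Rightarrow> nat \<Rightarrow> real"
  assumes indep: "indep_vars (\<lambda>_. count_space UNIV) X (rv_index K)"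
    and q: "0 \<le> q" "q \<le> 1"
    and eps: "0 < \<epsilon>"
    and ft_sym: "\<And>i j. ft i j = ft j i"
    and ft_nonneg: "\<And>i j. 0 \<le> ft i j"
    and ft_cap: "\<And>j. j \<in> nodes K \<Longrightarrow> (\<Sum>i\<in>nodes K - {j}. ft i j) \<le> p j"
    and ft_rate: "\<And>i j. (i, j) \<in> node_pairs K \<Longrightarrow> lam i j + \<epsilon> \<le> q * ft i j"
    and gen: "\<And>i t. i \<in> nodes K \<Longrightarrow> prob {\<omega>\<in>space M. X (Gen i t) \<omega> = 1} = p i"
    and label: "\<And>i j t. i \<in> nodes K \<Longrightarrow> j \<in> nodes K - {i} \<Longrightarrow>
                  prob {\<omega>\<in>space M. X (Label i t) \<omega> = j} = ft i j / p i"
    and req: "\<And>i j t. (i, j) \<in> node_pairs K \<Longrightarrow>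
                prob {\<omega>\<in>space M. X (Req i j t) \<omega> = 1} = lam i j \<and>
                prob {\<omega>\<in>space M. X (Req i j t) \<omega> = 0} = 1 - lam i j"
    and swp: "\<And>i j t. (i, j) \<in> node_pairs K \<Longrightarrow> prob {\<omega>\<in>space M. X (Swp i j t 0) \<omega> = 1} = q"
begin

lemma events_rv:
  assumes "k \<in> rv_index K"
  shows "{\<omega>\<in>space M. P (X k \<omega>)} \<in> events"
  using assms by (intro events_depends_only_on[OF indep, of "{k}"]) (auto simp: depends_only_on_def)

lemma ft_pos_le_p:
  assumes "(i, j) \<in> node_pairs K"
  shows "0 < ft i j" "ft i j \<le> p i" "ft i j \<le> p j"
proof -
  have ij: "i \<in> nodes K" "j \<in> nodes K" "i \<noteq> j"
    using node_pairsD[OF assms] by auto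
  have "0 \<le> lam i j"
    using req[OF assms, of 0] by (metis measure_nonneg)
  then have "0 < q * ft i j"
    using ft_rate[OF assms] eps by linarith
  then show "0 < ft i j"
    using ft_nonneg[of i j] by (cases "ft i j = 0") auto
  have ft_le: "ft a b \<le> p b" if "a \<in> nodes K - {b}" "b \<in> nodes K" for a b
    using member_le_sum[of a "nodes K - {b}" "\<lambda>a. ft a b"] ft_nonneg ft_cap[OF that(2)] that(1)
    by (simp add: nodes_def)
  show "ft i j \<le> p i"
    using ft_le[of j i] ij by (simp add: ft_sym[of i j])
  show "ft i j \<le> p j"
    using ft_le[of i j] ij by simp
qed

lemma expectation_new_labelled:
  assumes "i \<in> nodes K" "j \<in> nodes K - {i}" "0 < p i"
  shows "expectation (\<lambda>\<omega>. of_bool (X (Gen i s) \<omega> = 1 \<and> X (Label i s) \<omega> = j) :: real) = ft i j"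
proof -
  have vars: "{Gen i s} \<subseteq> rv_index K" "{Label i s} \<subseteq> rv_index K"
    using assms(1) by (auto simp: rv_index_def)
  have "expectation (\<lambda>\<omega>. of_bool (X (Gen i s) \<omega> = 1 \<and> X (Label i s) \<omega> = j) :: real) =
        prob {\<omega>\<in>space M. X (Gen i s) \<omega> = 1 \<and> X (Label i s) \<omega> = j}"
    using vars
    by (intro expectation_of_bool events_depends_only_on[OF indep, of "{Gen i s, Label i s}"])
       (auto simp: depends_only_on_def)
  also have "\<dots> = prob {\<omega>\<in>space M. X (Gen i s) \<omega> = 1} * prob {\<omega>\<in>space M. X (Label i s) \<omega> = j}"
    using vars
    by (intro prob_conj_depends_only_on_disjoint[OF indep, of "{Gen i s}" "{Label i s}"])
       (auto simp: depends_only_on_def)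
  also have "\<dots> = ft i j"
    using gen[OF assms(1), of s] label[OF assms(1,2), of s] assms(3) by simp
  finally show ?thesis .
qed

lemma AE_eventually_labelled_count_close:
  assumes "i \<in> nodes K" "j \<in> nodes K - {i}" "0 < p i" "0 < (\<delta> :: real)"
  shows "AE \<omega> in M. eventually (\<lambda>t.
           \<bar>real (labelled_count (\<lambda>k. X k \<omega>) i j t) - ft i j * t\<bar> < \<delta> * t) sequentially"
proof -
  have "AE \<omega> in M. eventually (\<lambda>t. \<bar>(\<Sum>s<t. of_bool (X (Gen i s) \<omega> = 1 \<and> X (Label i s) \<omega> = j))
          - ft i j * t\<bar> < \<delta> * t) sequentially"
    using assms expectation_new_labelled[OF assms(1-3)]
    by (intro AE_eventually_sum_close[OF indep, where L="\<lambda>s. {Gen i s, Label i s}"])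
       (auto simp: rv_index_def disjoint_family_on_def depends_only_on_def)
  then show ?thesis
    by (simp add: labelled_count_def)
qed

lemma AE_eventually_request_count_close:
  assumes "(i, j) \<in> node_pairs K" "0 < (\<delta> :: real)"
  shows "AE \<omega> in M. eventually (\<lambda>t.
           \<bar>(\<Sum>s<t. of_bool (X (Req i j s) \<omega> = 1)) - lam i j * t\<bar> < \<delta> * t) sequentially"
proof -
  have "Req i j s \<in> rv_index K" for s
    using assms(1) by (auto simp: rv_index_def)
  then have "expectation (\<lambda>\<omega>. of_bool (X (Req i j s) \<omega> = 1) :: real) = lam i j" for s
    using expectation_of_bool[OF events_rv[where P="\<lambda>v. v = 1"]] req[OF assms(1), of s] by simp
  with \<open>\<And>s. Req i j s \<in> rv_index K\<close> assms(2) show ?thesis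
    by (intro AE_eventually_sum_close[OF indep, where L="\<lambda>s. {Req i j s}"])
       (auto simp: disjoint_family_on_def depends_only_on_def)
qed

lemma AE_requests_le_1:
  assumes "(i, j) \<in> node_pairs K"
  shows "AE \<omega> in M. \<forall>t. X (Req i j t) \<omega> \<le> 1"
proof -
  have bernoulli: "AE \<omega> in M. \<omega> \<in> {\<omega>\<in>space M. X (Req i j t) \<omega> = 0} \<union> {\<omega>\<in>space M. X (Req i j t) \<omega> = 1}"
    for t
  proof (rule AE_prob_1)
    have "Req i j t \<in> rv_index K"
      using assms by (auto simp: rv_index_def)
    then show "prob ({\<omega>\<in>space M. X (Req i j t) \<omega> = 0} \<union> {\<omega>\<in>space M. X (Req i j t) \<omega> = 1}) = 1"
      using req[OF assms, of t] by (subst finite_measure_Union) (auto intro: events_rv)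
  qed
  have "AE \<omega> in M. X (Req i j t) \<omega> \<le> 1" for t
    using bernoulli[of t] by eventually_elim auto
  then show ?thesis
    by (simp add: AE_all_countable)
qed

lemma AE_eventually_successes_close:
  assumes "(i, j) \<in> node_pairs K" "0 < (\<delta> :: real)"
  shows "AE \<omega> in M. eventually (\<lambda>t.
           \<bar>real (\<Sum>s<t. stat_R (\<lambda>k. X k \<omega>) i j s) - q * swap_count (\<lambda>k. X k \<omega>) i j t\<bar> < \<delta> * t)
           sequentially"
proof -
  have "Swp i j s 0 \<in> rv_index K" for s
    using assms(1) by (auto simp: rv_index_def)
  then have "expectation (\<lambda>\<omega>. of_bool (X (Swp i j s 0) \<omega> = 1) :: real) = q" for s
    using expectation_of_bool[OF events_rv[where P="\<lambda>v. v = 1"]] swp[OF assms(1), of s] by simp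
  then have "AE \<omega> in M. eventually (\<lambda>t.
      \<bar>(\<Sum>s\<in>swap_slots (\<lambda>k. X k \<omega>) i j t. of_bool (X (Swp i j s 0) \<omega> = 1))
        - q * card (swap_slots (\<lambda>k. X k \<omega>) i j t)\<bar> < \<delta> * t) sequentially"
    using assms node_pairsD[OF assms(1)]
    by (intro AE_eventually_random_sum_close[OF indep, where J="gen_label_vars i j"
          and W="\<lambda>t x. swap_slots x i j t" and L="\<lambda>s. {Swp i j s 0}"] depends_only_on_swap_slots)
       (auto simp: gen_label_vars_def rv_index_def swap_slots_def disjoint_family_on_def
         depends_only_on_def)
  then show ?thesis
    using node_pairsD[OF assms(1)] by (simp add: sum_stat_R card_swap_slots)
qed

lemma AE_eventually_arrival_count_close:
  assumes ij: "(i, j) \<in> node_pairs K" and "0 < (\<delta> :: real)"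
  shows "AE \<omega> in M. eventually (\<lambda>t.
           \<bar>real (\<Sum>s<t. req_A (\<lambda>k. X k \<omega>) i j s) - lam i j * t\<bar> < \<delta> * t) sequentially"
  using AE_eventually_request_count_close[OF assms] AE_requests_le_1[OF ij]
proof eventually_elim
  case (elim \<omega>)
  have "real (req_A (\<lambda>k. X k \<omega>) i j s) = of_bool (X (Req i j s) \<omega> = 1)" for s
    using elim(2) req_A_node_pair[OF ij] by (auto simp: le_Suc_eq)
  with elim(1) show ?case
    by simp
qed

lemma AE_eventually_requests_served:
  assumes ij: "(i, j) \<in> node_pairs K"
  shows "AE \<omega> in M. eventually (\<lambda>t.
           (\<Sum>s<t. req_A (\<lambda>k. X k \<omega>) i j s) \<le> (\<Sum>s<Suc t. stat_R (\<lambda>k. X k \<omega>) i j s)) sequentially"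
proof -
  have "0 < \<epsilon> / 4"
    using eps by simp
  have nodes: "i \<in> nodes K" "j \<in> nodes K - {i}" "j \<in> nodes K" "i \<in> nodes K - {j}"
    using node_pairsD[OF ij] by auto
  have p: "0 < p i" "0 < p j"
    using ft_pos_le_p[OF ij] by linarith+
  show ?thesis
    using AE_eventually_labelled_count_close[OF nodes(1,2) p(1) \<open>0 < \<epsilon> / 4\<close>]
      AE_eventually_labelled_count_close[OF nodes(3,4) p(2) \<open>0 < \<epsilon> / 4\<close>]
      AE_eventually_successes_close[OF ij \<open>0 < \<epsilon> / 4\<close>]
      AE_eventually_arrival_count_close[OF ij \<open>0 < \<epsilon> / 4\<close>]
  proof eventually_elim
    case (elim \<omega>)
    with ft_rate[OF ij] q \<open>0 < \<epsilon> / 4\<close> show ?case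
      by (intro eventually_requests_served[where f="ft i j" and \<delta>="\<epsilon> / 4"]) (auto simp: ft_sym[of j i])
  qed
qed

theorem AE_avg_latency_tendsto_1:
  assumes "(i\<^sub>0, j\<^sub>0) \<in> node_pairs K" and "0 < lam i\<^sub>0 j\<^sub>0"
  shows "AE \<omega> in M. (\<lambda>T. avg_latency K (\<lambda>k. X k \<omega>) T) \<longlonglongrightarrow> 1"
proof -
  have "AE \<omega> in M. \<forall>(i, j)\<in>node_pairs K.
          eventually (\<lambda>t. (\<Sum>s<t. req_A (\<lambda>k. X k \<omega>) i j s) \<le> (\<Sum>s<Suc t. stat_R (\<lambda>k. X k \<omega>) i j s))
            sequentially \<and> (\<forall>t. X (Req i j t) \<omega> \<le> 1)"
    using AE_eventually_requests_served AE_requests_le_1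
    by (intro AE_finite_allI[OF finite_node_pairs]) auto
  moreover have "AE \<omega> in M. eventually (\<lambda>t. \<bar>real (\<Sum>s<t. req_A (\<lambda>k. X k \<omega>) i\<^sub>0 j\<^sub>0 s) - lam i\<^sub>0 j\<^sub>0 * t\<bar>
                   < lam i\<^sub>0 j\<^sub>0 / 2 * t) sequentially"
    using assms by (intro AE_eventually_arrival_count_close) auto
  ultimately show ?thesis
  proof eventually_elim
    case (elim \<omega>)
    define x where "x = (\<lambda>k. X k \<omega>)"
    have "eventually (\<lambda>n. lam i\<^sub>0 j\<^sub>0 / 2 * n \<le> real (\<Sum>s<n. \<Sum>(i, j)\<in>node_pairs K. req_A x i j s))
            sequentially"
      using elim(2)[folded x_def]
    proof (elim eventually_mono)
      fix n :: nat
      assume "\<bar>real (\<Sum>s<n. req_A x i\<^sub>0 j\<^sub>0 s) - lam i\<^sub>0 j\<^sub>0 * n\<bar> < lam i\<^sub>0 j\<^sub>0 / 2 * n"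
      moreover have "(\<Sum>s<n. req_A x i\<^sub>0 j\<^sub>0 s) \<le> (\<Sum>s<n. \<Sum>(i, j)\<in>node_pairs K. req_A x i j s)"
        using member_le_sum[OF assms(1), of "\<lambda>(i, j). req_A x i j _"] finite_node_pairs
        by (intro sum_mono) simp
      ultimately show "lam i\<^sub>0 j\<^sub>0 / 2 * n \<le> real (\<Sum>s<n. \<Sum>(i, j)\<in>node_pairs K. req_A x i j s)"
        by linarith
    qed
    then have "filterlim (\<lambda>n. real (\<Sum>s<n. \<Sum>(i, j)\<in>node_pairs K. req_A x i j s)) at_top sequentially"
      using assms(2) by (intro filterlim_at_top_if_eventually_ge_linear[of "lam i\<^sub>0 j\<^sub>0 / 2"]) auto
    with elim(1) show ?case
      unfolding x_def by (intro avg_latency_tendsto_1) (auto simp: req_A_node_pair)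
  qed
qed

end

theorem theorem3:
  fixes M :: "'a measure"
    and X :: "rv_idx \<Rightarrow> 'a \<Rightarrow> nat"
    and K :: nat and p :: "nat \<Rightarrow> real" and q :: real and \<epsilon> :: real
    and lam :: "nat \<Rightarrow> nat \<Rightarrow> real" and ft :: "nat \<Rightarrow> nat \<Rightarrow> real"
  assumes P: "prob_space M"
    and q: "0 \<le> q" "q \<le> 1"
    and p: "\<forall>i\<in>nodes K. 0 \<le> p i \<and> p i \<le> 1"
    and lam_sym: "\<forall>i j. lam i j = lam j i"
    and eps: "\<epsilon> > 0"
    and inLam: "in_Lambda K p q (\<lambda>i j. lam i j + \<epsilon>)"
    and ft_sym: "\<forall>i j. ft i j = ft j i"
    and ft_nonneg: "\<forall>i j. ft i j \<ge> 0"
    and ft_cap: "\<forall>j\<in>nodes K. (\<Sum>i\<in>nodes K - {j}. ft i j) \<le> p j"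
    and ft_rate: "\<forall>i\<in>nodes K. \<forall>j\<in>nodes K. i \<noteq> j \<longrightarrow> lam i j + \<epsilon> \<le> q * ft i j"
    and nontriv: "\<exists>(i, j)\<in>node_pairs K. lam i j > 0"
    and indep: "prob_space.indep_vars M (\<lambda>_. count_space UNIV) X (rv_index K)"
    and gen: "\<forall>i\<in>nodes K. \<forall>t.
                measure M {\<omega>\<in>space M. X (Gen i t) \<omega> = 1} = p i \<and>
                measure M {\<omega>\<in>space M. X (Gen i t) \<omega> = 0} = 1 - p i"
    and label: "\<forall>i\<in>nodes K. \<forall>t. \<forall>j\<in>nodes K - {i}.
                measure M {\<omega>\<in>space M. X (Label i t) \<omega> = j} = ft i j / p i"
    and req: "\<forall>(i, j)\<in>node_pairs K. \<forall>t.
                measure M {\<omega>\<in>space M. X (Req i j t) \<omega> = 1} = lam i j \<and>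
                measure M {\<omega>\<in>space M. X (Req i j t) \<omega> = 0} = 1 - lam i j"
    and swp: "\<forall>(i, j)\<in>node_pairs K. \<forall>t n.
                measure M {\<omega>\<in>space M. X (Swp i j t n) \<omega> = 1} = q \<and>
                measure M {\<omega>\<in>space M. X (Swp i j t n) \<omega> = 0} = 1 - q"
  shows "AE \<omega> in M. (\<lambda>T. avg_latency K (\<lambda>k. X k \<omega>) T) \<longlonglongrightarrow> 1"
proof -
  interpret stationary_switch M X K p q \<epsilon> lam ft
  proof (intro stationary_switch.intro stationary_switch_axioms.intro P)
    show "prob_space.indep_vars M (\<lambda>_. count_space UNIV) X (rv_index K)"
      by (rule indep)
    show "\<And>i j. (i, j) \<in> node_pairs K \<Longrightarrow> lam i j + \<epsilon> \<le> q * ft i j"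
      using ft_rate by (auto simp: node_pairs_def)
  qed (use q eps ft_sym ft_nonneg ft_cap gen label req swp in auto)
  obtain i\<^sub>0 j\<^sub>0 where "(i\<^sub>0, j\<^sub>0) \<in> node_pairs K" "0 < lam i\<^sub>0 j\<^sub>0"
    using nontriv by auto
  then show ?thesis
    by (rule AE_avg_latency_tendsto_1)
qed

end
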